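(* There exists a function $f\in\bigcap_{\alpha\in(0,1)}C^{0,\alpha}([0,1])$ which does not have the relaxed Sard property, i.e. $f_\#(\mathbf{1}_S\mathcal{L}^1)$ is not mutually singular with $\mathcal{L}^1$, where $S$ is the critical set of $f$.
   Context: $C^{0,\alpha}([0,1])$ is the space of $\alpha$-Hölder continuous real functions on $[0,1]$. $\mathcal{L}^1$ denotes Lebesgue measure on $\mathbb{R}$, $\mathbf{1}_A$ the indicator function of $A$, and $f_\#\mu$ the pushforward of the measure $\mu$ under $f$. The critical set $S$ of $f$ is the set of all points $x\in[0,1]$ at which $f$ is either not differentiable or has $f'(x)=0$. *)

theory Defs
  imports "HOL-Analysis.Analysis"
begin

definition holder_on01 :: "real \<Rightarrow> (real \<Rightarrow> real) \<Rightarrow> bool" where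
  "holder_on01 \<alpha> f \<longleftrightarrow>
     (\<exists>C. \<forall>x\<in>{0..1}. \<forall>y\<in>{0..1}. \<bar>f x - f y\<bar> \<le> C * \<bar>x - y\<bar> powr \<alpha>)"

definition critical_set :: "(real \<Rightarrow> real) \<Rightarrow> real set" where
  "critical_set f = {x\<in>{0..1}. \<not> f differentiable (at x within {0..1})
        \<or> (f has_real_derivative 0) (at x within {0..1})}"

definition mutually_singular :: "'a measure \<Rightarrow> 'a measure \<Rightarrow> bool" where
  "mutually_singular \<mu> \<nu> \<longleftrightarrow>
     (\<exists>A\<in>sets \<mu>. emeasure \<mu> A = 0 \<and> emeasure \<nu> (space \<nu> - A) = 0)"

end

theory Submission
  imports Defs
begin

text \<open>
  The function is the pointwise limit of \<open>zigzag_comp n\<close>, the composition of the rescaled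
  zigzags \<open>zigzag_scaled k\<close>, k < n, of mesh \<open>mesh k = 3^-k 2^-(k^2)\<close>; each of them maps every
  third of a cell of its mesh affinely, with slope 3 or -3, onto that cell. Hence
  \<open>zigzag_comp n\<close> is 3^n-Lipschitz and the next composition moves it by at most
  3^n mesh n = 2^-(n^2). Balancing the two bounds at the scale |x - y| ~ 2^-(N^2) gives
  alpha-Hoelder continuity for every alpha < 1.

  The grid points of mesh (mesh N)/3 are fixed by all later zigzags, so the limit agrees there
  with \<open>zigzag_comp (N + 1)\<close>, whose slope on each of these cells is 3^(N+1) or -3^(N+1). Every
  point of [0, 1] thus lies on arbitrarily short and steep secants: the limit is differentiable
  nowhere and its critical set is all of [0, 1].

  Each zigzag maps exactly three pieces of slope 3 or -3 into each cell, so its preimages do not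
  increase Lebesgue measure; the same holds for every \<open>zigzag_comp n\<close> and, on open sets and
  hence on null sets, for the limit. The push-forward of Lebesgue measure on [0, 1] is therefore
  absolutely continuous with total mass 1, so it is not singular to Lebesgue measure.
\<close>

section \<open>Limits, Hoelder bounds and secants\<close>

lemma limit_of_summable_steps:
  fixes F :: "nat \<Rightarrow> real"
  assumes steps: "\<And>k. \<bar>F (Suc k) - F k\<bar> \<le> e k" and e: "summable e"
  shows "F \<longlonglongrightarrow> lim F" and "\<bar>lim F - F n\<bar> \<le> (\<Sum>k. e (k + n))"
proof -
  define d where "d k = F (Suc k) - F k" for k
  have d: "summable d"
    by (rule summable_comparison_test'[OF e]) (simp add: d_def steps)
  have "F = (\<lambda>n. F 0 + (\<Sum>k<n. d k))"
    by (simp add: d_def sum_lessThan_telescope)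
  moreover have "(\<lambda>n. F 0 + (\<Sum>k<n. d k)) \<longlonglongrightarrow> F 0 + suminf d"
    by (intro tendsto_add tendsto_const summable_LIMSEQ d)
  ultimately have F: "F \<longlonglongrightarrow> F 0 + suminf d"
    by simp
  then show "F \<longlonglongrightarrow> lim F"
    by (simp add: limI)
  have "lim F - F n = (\<Sum>k. d (k + n))"
    using limI[OF F] suminf_split_initial_segment[OF d, of n]
    by (simp add: d_def sum_lessThan_telescope)
  also have "\<bar>\<dots>\<bar> \<le> (\<Sum>k. e (k + n))"
  proof -
    have e': "summable (\<lambda>k. e (k + n))"
      by (rule summable_ignore_initial_segment[OF e])
    have "summable (\<lambda>k. \<bar>d (k + n)\<bar>)"
      by (rule summable_comparison_test'[OF e']) (simp add: d_def steps)
    then have "\<bar>\<Sum>k. d (k + n)\<bar> \<le> (\<Sum>k. \<bar>d (k + n)\<bar>)"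
      by (rule summable_rabs)
    also have "\<dots> \<le> (\<Sum>k. e (k + n))"
      using steps by (intro suminf_le \<open>summable (\<lambda>k. \<bar>d (k + n)\<bar>)\<close> e') (simp add: d_def)
    finally show ?thesis .
  qed
  finally show "\<bar>lim F - F n\<bar> \<le> (\<Sum>k. e (k + n))" .
qed

lemma summable_half_power_sq: "summable (\<lambda>k. (1 / 2 :: real) ^ (k\<^sup>2))"
proof (rule summable_comparison_test'[OF summable_geometric[of "1 / 2 :: real"]])
  show "norm ((1 / 2 :: real) ^ (k\<^sup>2)) \<le> (1 / 2) ^ k" for k
    by (simp add: power_decreasing power2_eq_square)
qed simp

lemma suminf_half_power_sq_shift_le: "(\<Sum>k. (1 / 2 :: real) ^ ((k + n)\<^sup>2)) \<le> 2 * (1 / 2) ^ (n\<^sup>2)"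
proof -
  have le: "(1 / 2 :: real) ^ ((k + n)\<^sup>2) \<le> (1 / 2) ^ (n\<^sup>2) * (1 / 2) ^ k" for k
  proof -
    have "n\<^sup>2 + k \<le> (k + n)\<^sup>2"
      by (simp add: power2_eq_square algebra_simps) (cases k; simp)
    then have "(1 / 2 :: real) ^ ((k + n)\<^sup>2) \<le> (1 / 2) ^ (n\<^sup>2 + k)"
      by (intro power_decreasing) auto
    then show ?thesis
      by (simp add: power_add)
  qed
  have "(\<Sum>k. (1 / 2 :: real) ^ ((k + n)\<^sup>2)) \<le> (\<Sum>k. (1 / 2) ^ (n\<^sup>2) * (1 / 2) ^ k)"
    using summable_ignore_initial_segment[OF summable_half_power_sq] le
    by (intro suminf_le summable_mult summable_geometric) simp_all
  also have "\<dots> = 2 * (1 / 2) ^ (n\<^sup>2)"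
    using suminf_mult[OF summable_geometric[of "1 / 2 :: real"]] suminf_geometric[of "1 / 2 :: real"]
    by simp
  finally show ?thesis .
qed

lemma half_power_sq_bracket:
  fixes h :: real
  assumes "0 < h" "h \<le> 1"
  obtains N where "(1 / 2) ^ ((N + 1)\<^sup>2) < h" "h \<le> (1 / 2) ^ (N\<^sup>2)"
proof -
  define P where "P n \<longleftrightarrow> (1 / 2 :: real) ^ ((n + 1)\<^sup>2) < h" for n
  obtain n where n: "(1 / 2 :: real) ^ n < h"
    using real_arch_pow_inv[OF assms(1), of "1 / 2"] by auto
  have "(1 / 2 :: real) ^ ((n + 1)\<^sup>2) \<le> (1 / 2) ^ n"
    by (intro power_decreasing) (auto simp: power2_eq_square)
  then have "P n"
    using n unfolding P_def by linarith
  define N where "N = (LEAST n. P n)"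
  have "P N"
    unfolding N_def by (rule LeastI[of P, OF \<open>P n\<close>])
  moreover have "h \<le> (1 / 2) ^ (N\<^sup>2)"
  proof (cases N)
    case 0
    then show ?thesis
      using assms by simp
  next
    case (Suc k)
    then have "\<not> P k"
      unfolding N_def by (metis lessI not_less_Least)
    then show ?thesis
      using Suc by (simp add: P_def)
  qed
  ultimately show ?thesis
    using that by (simp add: P_def)
qed

lemma four_power_mult_half_power_sq_powr_le:
  fixes b :: real
  assumes "0 < b"
  shows "4 ^ N * ((1 / 2) ^ (N\<^sup>2)) powr b \<le> 2 powr (1 / b)"
proof -
  have "(2 * N - b * N\<^sup>2) * b = 1 - (b * N - 1)\<^sup>2"
    by (simp add: power2_eq_square algebra_simps)
  then have exponent: "2 * N - b * N\<^sup>2 \<le> 1 / b"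
    using assms by (simp add: pos_le_divide_eq)
  have "(4 :: real) ^ N = 2 powr real (2 * N)"
    by (subst powr_realpow) (simp_all add: power_mult)
  moreover have "((1 / 2 :: real) ^ (N\<^sup>2)) powr b = 2 powr (- (b * N\<^sup>2))"
  proof -
    have "(1 / 2 :: real) ^ (N\<^sup>2) = 2 powr (- real (N\<^sup>2))"
      by (subst powr_minus_divide, subst powr_realpow) (simp_all add: power_one_over)
    then show ?thesis
      by (simp add: powr_powr mult.commute)
  qed
  ultimately have "4 ^ N * ((1 / 2) ^ (N\<^sup>2)) powr b = 2 powr (real (2 * N) - b * N\<^sup>2)"
    by (simp add: powr_add[symmetric])
  also have "\<dots> \<le> 2 powr (1 / b)"
    using exponent by simp
  finally show ?thesis .
qed

lemma holder_of_two_scale_bound: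
  fixes g :: "real \<Rightarrow> real"
  assumes bound: "\<And>n. \<bar>g x - g y\<bar> \<le> 4 ^ n * \<bar>x - y\<bar> + B * (1 / 2) ^ (n\<^sup>2)"
    and "0 \<le> B" "0 < \<alpha>" "\<alpha> < 1" "\<bar>x - y\<bar> \<le> 1"
  shows "\<bar>g x - g y\<bar> \<le> (1 + 2 * B) * 2 powr (1 / (1 - \<alpha>)) * \<bar>x - y\<bar> powr \<alpha>"
proof (cases "x = y")
  case True
  then show ?thesis
    by simp
next
  case False
  define h where "h = \<bar>x - y\<bar>"
  have h: "0 < h" "h \<le> 1"
    using False assms(5) by (simp_all add: h_def)
  then obtain N where N: "(1 / 2) ^ ((N + 1)\<^sup>2) < h" "h \<le> (1 / 2) ^ (N\<^sup>2)"
    by (rule half_power_sq_bracket)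
  \<comment> \<open>at the scale N where h is about 2^(-N^2), both terms of the bound are of size 4^N h\<close>
  have "(1 / 2 :: real) ^ (N\<^sup>2) = 2 * 4 ^ N * (1 / 2) ^ ((N + 1)\<^sup>2)"
  proof -
    have "(N + 1)\<^sup>2 = N\<^sup>2 + (2 * N + 1)"
      by (simp add: power2_eq_square)
    then show ?thesis
      by (simp add: power_add power_mult power_one_over)
  qed
  then have "B * (1 / 2) ^ (N\<^sup>2) \<le> B * (2 * 4 ^ N * h)"
    using N(1) assms(2) by (simp add: mult_left_mono)
  then have "\<bar>g x - g y\<bar> \<le> (1 + 2 * B) * (4 ^ N * h)"
    using bound[of N] by (simp add: h_def algebra_simps)
  also have "4 ^ N * h = 4 ^ N * h powr (1 - \<alpha>) * h powr \<alpha>"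
    using h by (simp flip: powr_add)
  also have "\<dots> \<le> 4 ^ N * ((1 / 2) ^ (N\<^sup>2)) powr (1 - \<alpha>) * h powr \<alpha>"
    using h N(2) assms(4) by (intro mult_right_mono mult_left_mono powr_mono2) auto
  also have "\<dots> \<le> 2 powr (1 / (1 - \<alpha>)) * h powr \<alpha>"
    using assms(4) by (intro mult_right_mono four_power_mult_half_power_sq_powr_le) auto
  finally show ?thesis
    using assms(2) by (simp add: h_def mult.assoc mult_left_mono)
qed

lemma continuous_on_of_holder:
  fixes g :: "real \<Rightarrow> real"
  assumes holder: "\<And>x y. \<bar>x - y\<bar> \<le> 1 \<Longrightarrow> \<bar>g x - g y\<bar> \<le> C * \<bar>x - y\<bar> powr \<alpha>"
    and "0 < \<alpha>"
  shows "continuous_on UNIV g"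
proof (intro continuous_at_imp_continuous_on ballI)
  fix x :: real
  have "((\<lambda>y. \<bar>y - x\<bar>) \<longlongrightarrow> 0) (at x)"
    by (intro tendsto_rabs_zero) (simp add: LIM_zero_iff)
  then have "((\<lambda>y. \<bar>y - x\<bar> powr \<alpha>) \<longlongrightarrow> 0) (at x)"
    by (rule tendsto_zero_powrI[where b = \<alpha>]) (simp_all add: assms(2))
  then have lim: "((\<lambda>y. C * \<bar>y - x\<bar> powr \<alpha>) \<longlongrightarrow> 0) (at x)"
    by (rule tendsto_mult_right_zero)
  have "eventually (\<lambda>y. norm (g y - g x) \<le> C * \<bar>y - x\<bar> powr \<alpha>) (at x)"
    unfolding eventually_at
  proof (intro exI[of _ 1] conjI ballI impI)
    fix y :: real
    assume "y \<noteq> x \<and> dist y x < 1"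
    then show "norm (g y - g x) \<le> C * \<bar>y - x\<bar> powr \<alpha>"
      using holder[of y x] by (simp add: dist_real_def)
  qed simp
  then have "((\<lambda>y. g y - g x) \<longlongrightarrow> 0) (at x)"
    using lim by (rule Lim_null_comparison)
  then show "isCont g x"
    unfolding isCont_def by (rule LIM_zero_cancel)
qed

lemma not_differentiable_of_steep_secants:
  fixes f :: "real \<Rightarrow> real"
  assumes secants: "\<And>d K. 0 < d \<Longrightarrow>
      \<exists>a b. a \<in> T \<and> b \<in> T \<and> a \<le> x \<and> x \<le> b \<and> a < b \<and> b - a < d \<and>
        K * (b - a) \<le> \<bar>f b - f a\<bar>"
  shows "\<not> f differentiable (at x within T)"
proof
  assume "f differentiable (at x within T)"
  then obtain D where "(f has_real_derivative D) (at x within T)"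
    by (auto simp: real_differentiable_def)
  then have "\<forall>e>0. \<exists>d>0. \<forall>y\<in>T.
      \<bar>y - x\<bar> < d \<longrightarrow> \<bar>f y - f x - D * (y - x)\<bar> \<le> e * \<bar>y - x\<bar>"
    unfolding has_field_derivative_def has_derivative_within_alt by simp
  then obtain d where "0 < d"
    and d: "\<And>y. y \<in> T \<Longrightarrow> \<bar>y - x\<bar> < d \<Longrightarrow>
      \<bar>f y - f x - D * (y - x)\<bar> \<le> 1 / 2 * \<bar>y - x\<bar>"
    by (metis zero_less_divide_1_iff zero_less_numeral)
  then obtain a b where ab: "a \<in> T" "b \<in> T" "a \<le> x" "x \<le> b" "a < b" "b - a < d"
    and steep: "(\<bar>D\<bar> + 1) * (b - a) \<le> \<bar>f b - f a\<bar>"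
    using secants by blast
  have "\<bar>f b - f x - D * (b - x)\<bar> \<le> 1 / 2 * (b - x)" "\<bar>f a - f x - D * (a - x)\<bar> \<le> 1 / 2 * (x - a)"
    using d[of b] d[of a] ab by auto
  moreover have "f b - f a - D * (b - a) = (f b - f x - D * (b - x)) - (f a - f x - D * (a - x))"
    by (simp add: algebra_simps)
  ultimately have "\<bar>f b - f a - D * (b - a)\<bar> \<le> 1 / 2 * (b - a)"
    using abs_triangle_ineq4[of "f b - f x - D * (b - x)" "f a - f x - D * (a - x)"] by argo
  moreover have "\<bar>f b - f a\<bar> \<le> \<bar>f b - f a - D * (b - a)\<bar> + \<bar>D\<bar> * (b - a)"
    using abs_triangle_ineq[of "f b - f a - D * (b - a)" "D * (b - a)"] ab by (simp add: abs_mult)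
  ultimately show False
    using steep ab by (simp add: algebra_simps)
qed

section \<open>Preimages of Lebesgue measure\<close>

lemma emeasure_vimage_open_le_of_tendsto:
  fixes F :: "nat \<Rightarrow> real \<Rightarrow> real"
  assumes lim: "\<And>x. x \<in> A \<Longrightarrow> (\<lambda>n. F n x) \<longlonglongrightarrow> f x"
    and meas: "\<And>n. F n \<in> borel_measurable borel" and A: "A \<in> sets borel"
    and le: "\<And>n B. B \<in> sets borel \<Longrightarrow> emeasure lborel {x\<in>A. F n x \<in> B} \<le> emeasure lborel B"
    and U: "open U"
  shows "emeasure lborel {x\<in>A. f x \<in> U} \<le> emeasure lborel U"
proof -
  define E where "E n = {x\<in>A. \<forall>k\<ge>n. F k x \<in> U}" for n
  have [measurable]: "U \<in> sets borel"
    using U by simp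
  note meas[measurable] A[measurable]
  have E: "E n \<in> sets borel" for n
    unfolding E_def by measurable
  have "{x\<in>A. f x \<in> U} \<subseteq> (\<Union>n. E n)"
  proof
    fix x
    assume x: "x \<in> {x\<in>A. f x \<in> U}"
    then have "eventually (\<lambda>k. F k x \<in> U) sequentially"
      using topological_tendstoD[OF lim U] by auto
    then show "x \<in> (\<Union>n. E n)"
      using x by (auto simp: E_def eventually_sequentially)
  qed
  then have "emeasure lborel {x\<in>A. f x \<in> U} \<le> emeasure lborel (\<Union>n. E n)"
    using E by (intro emeasure_mono) auto
  also have "\<dots> = (SUP n. emeasure lborel (E n))"
    using E by (intro SUP_emeasure_incseq[symmetric]) (auto simp: incseq_def E_def)
  also have "\<dots> \<le> emeasure lborel U"
  proof (rule SUP_least)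
    fix n
    have "emeasure lborel (E n) \<le> emeasure lborel {x\<in>A. F n x \<in> U}"
      using U A by (intro emeasure_mono) (auto simp: E_def)
    also have "\<dots> \<le> emeasure lborel U"
      using U by (intro le) auto
    finally show "emeasure lborel (E n) \<le> emeasure lborel U" .
  qed
  finally show ?thesis .
qed

lemma emeasure_vimage_null_of_open_le:
  fixes f :: "real \<Rightarrow> real"
  assumes open_le: "\<And>U. open U \<Longrightarrow> emeasure lborel {x\<in>A. f x \<in> U} \<le> emeasure lborel U"
    and f: "f \<in> borel_measurable borel" and A: "A \<in> sets borel"
    and B: "B \<in> sets borel" "emeasure lborel B = 0"
  shows "emeasure lborel {x\<in>A. f x \<in> B} = 0"
proof -
  have "emeasure lborel {x\<in>A. f x \<in> B} \<le> 0 + ennreal e" if "0 < e" for e :: real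
  proof -
    obtain U where U: "open U" "B \<subseteq> U" "emeasure lborel (U - B) < e"
      using outer_regular_lborel[OF B(1) \<open>0 < e\<close>] by blast
    have "{x\<in>A. f x \<in> U} \<in> sets borel"
      using sets.Int[OF A measurable_sets_borel[OF f borel_open[OF U(1)]]] by (simp add: Int_def vimage_def)
    then have "emeasure lborel {x\<in>A. f x \<in> B} \<le> emeasure lborel {x\<in>A. f x \<in> U}"
      using U(2) by (intro emeasure_mono) auto
    also have "\<dots> \<le> emeasure lborel U"
      by (rule open_le[OF U(1)])
    also have "\<dots> = emeasure lborel (B \<union> (U - B))"
      using U(2) by (simp add: Un_absorb1)
    also have "\<dots> \<le> emeasure lborel B + emeasure lborel (U - B)"
      using U B by (intro emeasure_subadditive) auto
    also have "\<dots> \<le> 0 + ennreal e"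
      using U(3) B(2) by simp
    finally show ?thesis .
  qed
  then have "emeasure lborel {x\<in>A. f x \<in> B} \<le> 0"
    by (rule ennreal_le_epsilon)
  then show ?thesis
    by simp
qed

lemma not_mutually_singular_distr_density:
  fixes f :: "real \<Rightarrow> real"
  assumes S: "S \<in> sets borel" "emeasure lborel S \<noteq> 0" and f: "f \<in> borel_measurable borel"
    and null: "\<And>B. B \<in> sets borel \<Longrightarrow> emeasure lborel B = 0 \<Longrightarrow> emeasure lborel {x\<in>S. f x \<in> B} = 0"
  shows "\<not> mutually_singular (distr (density lebesgue (indicator S)) lborel f) lborel"
proof
  define \<mu> where "\<mu> = distr (density lebesgue (indicator S)) lborel f"
  have \<mu>: "emeasure \<mu> X = emeasure lborel {x\<in>S. f x \<in> X}" if X: "X \<in> sets borel" for X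
  proof -
    have pre: "f -` X \<in> sets borel"
      using measurable_sets_borel[OF f X] .
    have "{x\<in>S. f x \<in> X} = S \<inter> f -` X"
      by auto
    then have SX: "{x\<in>S. f x \<in> X} \<in> sets borel"
      using S(1) pre by auto
    have mf: "f \<in> measurable (density lebesgue (indicator S)) lborel"
      using f by (simp add: measurable_completion)
    have "emeasure \<mu> X = emeasure (density lebesgue (indicator S)) (f -` X)"
      using X by (simp add: \<mu>_def emeasure_distr[OF mf])
    also have "\<dots> = (\<integral>\<^sup>+ x. indicator S x * indicator (f -` X) x \<partial>lebesgue)"
      using S(1) pre by (intro emeasure_density borel_measurable_indicator) auto
    also have "\<dots> = (\<integral>\<^sup>+ x. indicator {x\<in>S. f x \<in> X} x \<partial>lborel)"
      by (simp add: nn_integral_completion indicator_inter_arith[symmetric] Int_def)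
    also have "\<dots> = emeasure lborel {x\<in>S. f x \<in> X}"
      using SX by simp
    finally show ?thesis .
  qed
  assume "mutually_singular (distr (density lebesgue (indicator S)) lborel f) lborel"
  then obtain A where A: "A \<in> sets borel" "emeasure \<mu> A = 0" "emeasure lborel (UNIV - A) = 0"
    unfolding mutually_singular_def \<mu>_def by auto
  have "emeasure \<mu> (UNIV - A) = 0"
    using A null[of "UNIV - A"] by (simp add: \<mu>)
  then have "emeasure \<mu> UNIV = 0"
    using A emeasure_subadditive[of A \<mu> "UNIV - A"] by (simp add: \<mu>_def Un_Diff_cancel)
  moreover have "emeasure \<mu> UNIV = emeasure lborel S"
    by (simp add: \<mu>)
  ultimately show False
    using S(2) by simp
qed

section \<open>Affine maps on grid cells\<close>

definition cell :: "real \<Rightarrow> int \<Rightarrow> real set" where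
  "cell \<delta> j = {of_int j * \<delta> .. (of_int j + 1) * \<delta>}"

definition cellwise_affine :: "real \<Rightarrow> real \<Rightarrow> (real \<Rightarrow> real) \<Rightarrow> bool" where
  "cellwise_affine \<delta> \<sigma> g \<longleftrightarrow>
     (\<forall>j. \<exists>c s. \<bar>s\<bar> = \<sigma> \<and> (\<forall>x\<in>cell \<delta> j. g x = c + s * x))"

definition zigzag_on_cells :: "real \<Rightarrow> (real \<Rightarrow> real) \<Rightarrow> bool" where
  "zigzag_on_cells \<delta> h \<longleftrightarrow>
     (\<forall>j. \<exists>c s. \<bar>s\<bar> = 3 \<and>
        (\<forall>x\<in>cell (\<delta> / 3) j. h x = c + s * x \<and> h x \<in> cell \<delta> (j div 3)))"

lemma cell_subset_cell_div:
  assumes "0 < \<delta>" "0 < q"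
  shows "cell (\<delta> / of_int q) j \<subseteq> cell \<delta> (j div q)"
proof -
  have "q * (j div q) \<le> j" "j + 1 \<le> q * (j div q) + q"
    using mult_div_mod_eq[of q j] pos_mod_sign[of q j] pos_mod_bound[of q j] assms(2)
    by linarith+
  then have "of_int q * of_int (j div q) \<le> (of_int j :: real)"
    "of_int j + 1 \<le> of_int q * of_int (j div q) + (of_int q :: real)"
    by (metis of_int_le_iff of_int_mult, metis of_int_le_iff of_int_mult of_int_add of_int_1)
  then have "of_int q * of_int (j div q) * \<delta> \<le> of_int j * \<delta>"
    "(of_int j + 1) * \<delta> \<le> (of_int q * of_int (j div q) + of_int q) * \<delta>"
    using assms(1) by (simp_all add: mult_right_mono)
  then have "of_int (j div q) * \<delta> \<le> of_int j * \<delta> / of_int q"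
    "(of_int j + 1) * \<delta> / of_int q \<le> (of_int (j div q) + 1) * \<delta>"
    using assms(2) by (simp_all add: field_simps)
  then show ?thesis
    by (auto simp: cell_def)
qed

lemma cellwise_affine_refine:
  assumes "cellwise_affine \<delta> \<sigma> g" "0 < \<delta>" "0 < q"
  shows "cellwise_affine (\<delta> / of_int q) \<sigma> g"
  using assms cell_subset_cell_div[OF assms(2,3)] unfolding cellwise_affine_def by blast

lemma cellwise_affine_comp:
  assumes g: "cellwise_affine \<delta> \<sigma> g" and h: "zigzag_on_cells \<delta> h"
  shows "cellwise_affine (\<delta> / 3) (3 * \<sigma>) (g \<circ> h)"
  unfolding cellwise_affine_def
proof
  fix j
  obtain c s where s: "\<bar>s\<bar> = 3"
    and cs: "\<And>x. x \<in> cell (\<delta> / 3) j \<Longrightarrow> h x = c + s * x \<and> h x \<in> cell \<delta> (j div 3)"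
    using h unfolding zigzag_on_cells_def by blast
  obtain c' s' where s': "\<bar>s'\<bar> = \<sigma>" and cs': "\<And>y. y \<in> cell \<delta> (j div 3) \<Longrightarrow> g y = c' + s' * y"
    using g unfolding cellwise_affine_def by blast
  have "(g \<circ> h) x = (c' + s' * c) + (s' * s) * x" if "x \<in> cell (\<delta> / 3) j" for x
  proof -
    have hx: "h x = c + s * x" "h x \<in> cell \<delta> (j div 3)"
      using cs[OF that] by auto
    show ?thesis
      using cs'[OF hx(2)] by (simp add: hx algebra_simps)
  qed
  moreover have "\<bar>s' * s\<bar> = 3 * \<sigma>"
    using s s' by (simp add: abs_mult)
  ultimately show "\<exists>c s. \<bar>s\<bar> = 3 * \<sigma> \<and> (\<forall>x\<in>cell (\<delta> / 3) j. (g \<circ> h) x = c + s * x)"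
    by blast
qed

lemma zigzag_on_cells_scaled:
  assumes "zigzag_on_cells 1 h" "0 < \<delta>"
  shows "zigzag_on_cells \<delta> (\<lambda>x. \<delta> * h (x / \<delta>))"
  unfolding zigzag_on_cells_def
proof
  fix j
  obtain c s where s: "\<bar>s\<bar> = 3"
    and cs: "\<And>u. u \<in> cell (1 / 3) j \<Longrightarrow> h u = c + s * u \<and> h u \<in> cell 1 (j div 3)"
    using assms(1) unfolding zigzag_on_cells_def by blast
  have "\<delta> * h (x / \<delta>) = \<delta> * c + s * x \<and> \<delta> * h (x / \<delta>) \<in> cell \<delta> (j div 3)"
    if "x \<in> cell (\<delta> / 3) j" for x
  proof -
    have "x / \<delta> \<in> cell (1 / 3) j"
      using that assms(2) by (simp add: cell_def field_simps)
    then have hu: "h (x / \<delta>) = c + s * (x / \<delta>)" "h (x / \<delta>) \<in> cell 1 (j div 3)"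
      using cs by blast+
    have "\<delta> * h (x / \<delta>) = \<delta> * c + s * x"
      using hu(1) assms(2) by (simp add: field_simps)
    moreover have "\<delta> * h (x / \<delta>) \<in> cell \<delta> (j div 3)"
      using hu(2) assms(2) by (auto simp: cell_def mult.commute[of _ \<delta>])
    ultimately show ?thesis by blast
  qed
  then show "\<exists>c s. \<bar>s\<bar> = 3 \<and>
      (\<forall>x\<in>cell (\<delta> / 3) j. \<delta> * h (x / \<delta>) = c + s * x \<and> \<delta> * h (x / \<delta>) \<in> cell \<delta> (j div 3))"
    using s by blast
qed

lemma unit_interval_cell_cover:
  assumes "0 < K" "x \<in> {0..1}"
  obtains j where "0 \<le> j" "j < int K" "x \<in> cell (1 / real K) j"
proof
  define j where "j = min \<lfloor>real K * x\<rfloor> (int K - 1)"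
  have "real K * x \<le> real K"
    using assms by (simp add: mult_left_le)
  then have "\<lfloor>real K * x\<rfloor> \<le> int K"
    by (metis floor_mono floor_of_nat)
  moreover have "0 \<le> \<lfloor>real K * x\<rfloor>"
    using assms by simp
  ultimately show "0 \<le> j" "j < int K"
    using assms(1) by (auto simp: j_def)
  have "of_int j \<le> real K * x" "real K * x \<le> of_int j + 1"
    using assms by (auto simp: j_def min_def) linarith+
  then show "x \<in> cell (1 / real K) j"
    using assms(1) by (simp add: cell_def field_simps)
qed

lemma cell_subset_unit_interval:
  assumes "0 \<le> j" "j < int K"
  shows "cell (1 / real K) j \<subseteq> {0..1}"
proof -
  have "of_int j + 1 \<le> real K"
    using assms(2) by linarith
  then show ?thesis
    using assms by (auto simp: cell_def divide_simps)
qed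

lemma zigzag_on_cells_maps_unit_interval:
  assumes h: "zigzag_on_cells (1 / real M) h" and "0 < M" "x \<in> {0..1}"
  shows "h x \<in> {0..1}"
proof -
  obtain j where j: "0 \<le> j" "j < int (3 * M)" "x \<in> cell (1 / real M / 3) j"
    using unit_interval_cell_cover[of "3 * M" x] assms by (auto simp: mult.commute)
  then have "h x \<in> cell (1 / real M) (j div 3)"
    using h unfolding zigzag_on_cells_def by blast
  moreover have "cell (1 / real M) (j div 3) \<subseteq> {0..1}"
    using j by (intro cell_subset_unit_interval) auto
  ultimately show ?thesis
    by blast
qed

lemma emeasure_lborel_affine_vimage:
  fixes c t :: real
  assumes "c \<noteq> 0" "E \<in> sets borel"
  shows "emeasure lborel ((\<lambda>x. t + c * x) -` E) = ennreal (1 / \<bar>c\<bar>) * emeasure lborel E"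
proof -
  have "emeasure lborel E = emeasure (density (distr lborel borel (\<lambda>x. t + c * x)) (\<lambda>_. ennreal \<bar>c\<bar>)) E"
    by (subst lborel_real_affine[OF assms(1), of t]) (rule refl)
  also have "\<dots> = ennreal \<bar>c\<bar> * emeasure lborel ((\<lambda>x. t + c * x) -` E)"
    using assms(2) by (simp add: emeasure_density nn_integral_cmult_indicator emeasure_distr)
  finally have "ennreal (1 / \<bar>c\<bar>) * emeasure lborel E
      = (ennreal (1 / \<bar>c\<bar>) * ennreal \<bar>c\<bar>) * emeasure lborel ((\<lambda>x. t + c * x) -` E)"
    by (simp add: mult.assoc)
  also have "ennreal (1 / \<bar>c\<bar>) * ennreal \<bar>c\<bar> = 1"
    using assms(1) by (simp flip: ennreal_mult)
  finally show ?thesis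
    by simp
qed

lemma sum_emeasure_cells_le:
  assumes "0 < \<delta>" "B \<in> sets borel"
  shows "(\<Sum>m<M. emeasure lborel (B \<inter> cell \<delta> (int m))) \<le> emeasure lborel B"
proof -
  define C where "C m = B \<inter> {real m * \<delta> ..< (real m + 1) * \<delta>}" for m :: nat
  have C: "C m \<in> sets borel" for m
    using assms(2) by (simp add: C_def)
  have "emeasure lborel (B \<inter> cell \<delta> (int m)) \<le> emeasure lborel (C m \<union> {(real m + 1) * \<delta>})" for m
    using C by (intro emeasure_mono) (auto simp: C_def cell_def)
  also have "emeasure lborel (C m \<union> {(real m + 1) * \<delta>}) = emeasure lborel (C m)" for m
    using C by (intro emeasure_Un_null_set) auto
  finally have "(\<Sum>m<M. emeasure lborel (B \<inter> cell \<delta> (int m))) \<le> (\<Sum>m<M. emeasure lborel (C m))"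
    by (intro sum_mono)
  also have "\<dots> = emeasure lborel (\<Union>m<M. C m)"
  proof (rule sum_emeasure)
    show "disjoint_family_on C {..<M}"
      unfolding disjoint_family_on_def
    proof (intro ballI impI)
      fix m n :: nat
      assume "m \<noteq> n"
      then consider "m + 1 \<le> n" | "n + 1 \<le> m"
        by linarith
      then have "(real m + 1) * \<delta> \<le> real n * \<delta> \<or> (real n + 1) * \<delta> \<le> real m * \<delta>"
        using assms(1) by cases (auto intro!: mult_right_mono)
      then show "C m \<inter> C n = {}"
        by (auto simp: C_def)
    qed
  qed (use C in auto)
  also have "\<dots> \<le> emeasure lborel B"
    using assms(2) by (intro emeasure_mono) (auto simp: C_def)
  finally show ?thesis .
qed

lemma sum_lessThan_mult_div:
  fixes f :: "nat \<Rightarrow> 'a::semiring_1"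
  shows "(\<Sum>j<M * k. f (j div k)) = (\<Sum>m<M. of_nat k * f m)"
proof -
  have "(\<Sum>j<M * k. f (j div k)) = (\<Sum>m<M. \<Sum>j\<in>{m * k..<m * k + k}. f (j div k))"
    by (rule sum.nat_group[symmetric])
  also have "\<dots> = (\<Sum>m<M. \<Sum>j\<in>{m * k..<m * k + k}. f m)"
    by (intro sum.cong refl arg_cong[where f = f] div_nat_eqI) (auto simp: algebra_simps)
  finally show ?thesis
    by simp
qed

lemma vimage_subset_of_affine_on_cells:
  assumes "0 < M"
    and cs: "\<And>j x. x \<in> cell (1 / real M / 3) j \<Longrightarrow> h x = c j + s j * x \<and> h x \<in> cell (1 / real M) (j div 3)"
  shows "{x\<in>{0..1}. h x \<in> B}
    \<subseteq> (\<Union>j<3 * M. (\<lambda>x. c (int j) + s (int j) * x) -` (B \<inter> cell (1 / real M) (int (j div 3))))"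
proof
  fix x
  assume x: "x \<in> {x\<in>{0..1}. h x \<in> B}"
  obtain j where j: "0 \<le> j" "j < int (3 * M)" "x \<in> cell (1 / real M / 3) j"
    using unit_interval_cell_cover[of "3 * M" x] assms(1) x by (auto simp: mult.commute)
  then have "h x = c j + s j * x" "h x \<in> B \<inter> cell (1 / real M) (int (nat j div 3))"
    using cs[of x j] x by (auto simp: zdiv_int)
  then show "x \<in> (\<Union>j<3 * M. (\<lambda>x. c (int j) + s (int j) * x) -` (B \<inter> cell (1 / real M) (int (j div 3))))"
    using j by (intro UN_I[of "nat j"]) auto
qed

lemma emeasure_vimage_le_of_zigzag_on_cells:
  assumes h: "zigzag_on_cells (1 / real M) h" and "0 < M" and B: "B \<in> sets borel"
  shows "emeasure lborel {x\<in>{0..1}. h x \<in> B} \<le> emeasure lborel B"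
proof -
  obtain c s where s: "\<And>j. \<bar>s j\<bar> = 3"
    and cs: "\<And>j x. x \<in> cell (1 / real M / 3) j \<Longrightarrow> h x = c j + s j * x \<and> h x \<in> cell (1 / real M) (j div 3)"
    using h unfolding zigzag_on_cells_def by metis
  define \<delta> where "\<delta> = 1 / real M"
  have \<delta>: "0 < \<delta>"
    using assms(2) by (simp add: \<delta>_def)
  note cover = vimage_subset_of_affine_on_cells[OF assms(2) cs, of B, folded \<delta>_def]
  define P where "P j = (\<lambda>x. c (int j) + s (int j) * x) -` (B \<inter> cell \<delta> (int (j div 3)))" for j
  have T: "B \<inter> cell \<delta> m \<in> sets borel" for m
    using B by (simp add: cell_def)
  have P: "P j \<in> sets borel" for j
    unfolding P_def by (rule measurable_sets_borel[OF _ T]) simp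
  \<comment> \<open>each cell is hit by exactly three of the pieces, and each piece shrinks measure by 1/3\<close>
  have "{x\<in>{0..1}. h x \<in> B} \<subseteq> (\<Union>j<3 * M. P j)"
    using cover by (simp only: P_def)
  then have "emeasure lborel {x\<in>{0..1}. h x \<in> B} \<le> emeasure lborel (\<Union>j<3 * M. P j)"
    using P by (intro emeasure_mono) auto
  also have "\<dots> \<le> (\<Sum>j<3 * M. emeasure lborel (P j))"
    using P by (intro emeasure_subadditive_finite) auto
  also have "\<dots> = (\<Sum>j<3 * M. ennreal (1 / 3) * emeasure lborel (B \<inter> cell \<delta> (int (j div 3))))"
  proof (rule sum.cong[OF refl])
    fix j
    have "s (int j) \<noteq> 0"
      using s[of "int j"] by auto
    then show "emeasure lborel (P j) = ennreal (1 / 3) * emeasure lborel (B \<inter> cell \<delta> (int (j div 3)))"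
      unfolding P_def by (subst emeasure_lborel_affine_vimage[OF _ T]) (simp_all add: s)
  qed
  also have "\<dots> = (\<Sum>m<M. of_nat 3 * (ennreal (1 / 3) * emeasure lborel (B \<inter> cell \<delta> (int m))))"
    using sum_lessThan_mult_div[where M = M and k = 3] by (simp add: mult.commute[of 3 M])
  also have "\<dots> = (\<Sum>m<M. emeasure lborel (B \<inter> cell \<delta> (int m)))"
    by (simp add: mult.assoc[symmetric] ennreal_mult[symmetric] flip: ennreal_numeral)
  also have "\<dots> \<le> emeasure lborel B"
    by (rule sum_emeasure_cells_le[OF \<delta> B])
  finally show ?thesis .
qed

section \<open>The zigzag construction\<close>

\<comment> \<open>the N-shaped map through (0, 0), (1/3, 1), (2/3, 0) and (1, 1)\<close>
definition zigzag_unit :: "real \<Rightarrow> real" where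
  "zigzag_unit t = max (min (3 * t) (2 - 3 * t)) (3 * t - 2)"

definition zigzag :: "real \<Rightarrow> real" where
  "zigzag u = of_int \<lfloor>u\<rfloor> + zigzag_unit (frac u)"

lemma zigzag_unit_0 [simp]: "zigzag_unit 0 = 0"
  and zigzag_unit_1 [simp]: "zigzag_unit 1 = 1"
  by (simp_all add: zigzag_unit_def)

lemma zigzag_unit_bounds: "0 \<le> t \<Longrightarrow> t \<le> 1 \<Longrightarrow> 0 \<le> zigzag_unit t \<and> zigzag_unit t \<le> 1"
  by (simp add: zigzag_unit_def max_def min_def)

lemma zigzag_unit_lipschitz: "\<bar>zigzag_unit s - zigzag_unit t\<bar> \<le> 3 * \<bar>s - t\<bar>"
  unfolding zigzag_unit_def by (simp add: max_def min_def abs_if split: if_splits)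

lemma zigzag_unit_affine_on_thirds:
  assumes "0 \<le> i" "i < 3"
  shows "\<exists>c s. \<bar>s\<bar> = 3 \<and> (\<forall>t\<in>cell (1 / 3) i. zigzag_unit t = c + s * t)"
proof -
  consider "i = 0" | "i = 1" | "i = 2"
    using assms by linarith
  then show ?thesis
  proof cases
    case 1
    then show ?thesis
      by (intro exI[of _ 0] exI[of _ 3]) (auto simp: cell_def zigzag_unit_def)
  next
    case 2
    then show ?thesis
      by (intro exI[of _ 2] exI[of _ "-3"]) (auto simp: cell_def zigzag_unit_def)
  next
    case 3
    then show ?thesis
      by (intro exI[of _ "-2"] exI[of _ 3]) (auto simp: cell_def zigzag_unit_def)
  qed
qed

lemma zigzag_eq_on_unit_cell:
  assumes "of_int m \<le> u" "u \<le> of_int m + 1"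
  shows "zigzag u = of_int m + zigzag_unit (u - of_int m)"
proof (cases "u < of_int m + 1")
  case True
  then have "\<lfloor>u\<rfloor> = m"
    using assms by (simp add: floor_eq_iff)
  then show ?thesis
    by (simp add: zigzag_def frac_def)
next
  case False
  then have "u = of_int (m + 1)"
    using assms by simp
  then show ?thesis
    by (simp add: zigzag_def)
qed

lemma zigzag_of_int [simp]: "zigzag (of_int n) = of_int n"
  by (simp add: zigzag_def)

lemma zigzag_bounds: "of_int \<lfloor>u\<rfloor> \<le> zigzag u \<and> zigzag u \<le> of_int \<lfloor>u\<rfloor> + 1"
  using zigzag_unit_bounds[of "frac u"] frac_ge_0[of u] frac_lt_1[of u]
  by (simp add: zigzag_def)

lemma zigzag_dist_le_1: "\<bar>zigzag u - u\<bar> \<le> 1"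
  using zigzag_bounds[of u] of_int_floor_le[of u] real_of_int_floor_add_one_gt[of u]
  by linarith

lemma zigzag_lipschitz: "\<bar>zigzag u - zigzag v\<bar> \<le> 3 * \<bar>u - v\<bar>"
proof -
  have *: "\<bar>zigzag u - zigzag v\<bar> \<le> 3 * \<bar>u - v\<bar>" if uv: "u \<le> v" for u v
  proof (cases "\<lfloor>u\<rfloor> = \<lfloor>v\<rfloor>")
    case True
    then show ?thesis
      using zigzag_unit_lipschitz[of "frac u" "frac v"] by (simp add: zigzag_def frac_def)
  next
    case False
    define a b where "a = \<lfloor>u\<rfloor>" and "b = \<lfloor>v\<rfloor>"
    have "a < b"
      using False floor_mono[OF uv] by (simp add: a_def b_def)
    moreover have "of_int a \<le> u" "u < of_int a + 1" "of_int b \<le> v"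
      unfolding a_def b_def by linarith+
    \<comment> \<open>zigzag u \<le> a + 1 \<le> b \<le> zigzag v, and each partial cell is bounded via the values at 1 and 0\<close>
    moreover have "1 - zigzag_unit (frac u) \<le> 3 * (1 - frac u)"
      using zigzag_unit_lipschitz[of 1 "frac u"] frac_lt_1[of u] by (simp split: abs_split)
    moreover have "zigzag_unit (frac v) \<le> 3 * frac v"
      using zigzag_unit_lipschitz[of "frac v" 0] frac_ge_0[of v] by simp
    moreover have "0 \<le> zigzag_unit (frac u)" "zigzag_unit (frac u) \<le> 1"
      using zigzag_unit_bounds[of "frac u"] frac_ge_0[of u] frac_lt_1[of u] by simp_all
    moreover have "0 \<le> zigzag_unit (frac v)"
      using zigzag_unit_bounds[of "frac v"] frac_ge_0[of v] frac_lt_1[of v] by simp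
    ultimately show ?thesis
      by (simp add: zigzag_def frac_def a_def b_def)
  qed
  show ?thesis
    using *[of u v] *[of v u] by (cases "u \<le> v") (auto simp: abs_minus_commute)
qed

lemma zigzag_on_cells_zigzag: "zigzag_on_cells 1 zigzag"
  unfolding zigzag_on_cells_def
proof
  fix j :: int
  define m i where "m = j div 3" and "i = j mod 3"
  have i: "0 \<le> i" "i < 3" and j: "j = 3 * m + i"
    by (simp_all add: m_def i_def)
  obtain c s where s: "\<bar>s\<bar> = 3" and cs: "\<And>t. t \<in> cell (1 / 3) i \<Longrightarrow> zigzag_unit t = c + s * t"
    using zigzag_unit_affine_on_thirds[OF i] by blast
  have "zigzag u = (of_int m + c - s * of_int m) + s * u \<and> zigzag u \<in> cell 1 m"
    if "u \<in> cell (1 / 3) j" for u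
  proof -
    have "u - of_int m \<in> cell (1 / 3) i"
      using that by (simp add: cell_def j field_simps)
    moreover have m: "of_int m \<le> u" "u \<le> of_int m + 1"
      using that i by (simp_all add: cell_def j field_simps)
    ultimately show ?thesis
      using cs zigzag_unit_bounds[of "u - of_int m"]
      by (simp add: zigzag_eq_on_unit_cell[OF m] cell_def algebra_simps)
  qed
  then show "\<exists>c s. \<bar>s\<bar> = 3 \<and>
      (\<forall>u\<in>cell (1 / 3) j. zigzag u = c + s * u \<and> zigzag u \<in> cell 1 (j div 3))"
    using s unfolding m_def by blast
qed

definition mesh :: "nat \<Rightarrow> real" where
  "mesh k = 1 / (3 ^ k * 2 ^ (k\<^sup>2))"

definition zigzag_scaled :: "nat \<Rightarrow> real \<Rightarrow> real" where
  "zigzag_scaled k x = mesh k * zigzag (x / mesh k)"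

primrec zigzag_comp :: "nat \<Rightarrow> real \<Rightarrow> real" where
  "zigzag_comp 0 x = x"
| "zigzag_comp (Suc k) x = zigzag_comp k (zigzag_scaled k x)"

lemma mesh_pos: "0 < mesh k"
  by (simp add: mesh_def)

lemma mesh_Suc: "mesh (Suc k) = mesh k / 3 / 2 ^ (2 * k + 1)"
proof -
  have "(Suc k)\<^sup>2 = k\<^sup>2 + (2 * k + 1)"
    by (simp add: power2_eq_square)
  then show ?thesis
    by (simp add: mesh_def power_add)
qed

lemma mesh_le_inverse_power_3: "mesh N \<le> 1 / 3 ^ N"
  unfolding mesh_def by (simp add: field_simps)

lemma mesh_div_3_eq_multiple:
  assumes "N < k"
  shows "mesh N / 3 = of_nat (3 ^ (k - Suc N) * 2 ^ (k\<^sup>2 - N\<^sup>2)) * mesh k"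
proof -
  obtain d where d: "k = Suc N + d"
    using less_imp_Suc_add[OF assms] by auto
  obtain e where e: "k\<^sup>2 = N\<^sup>2 + e"
    using le_Suc_ex[of "N\<^sup>2" "k\<^sup>2"] assms by (auto simp: power_mono)
  have "(3::real) ^ k = 3 * 3 ^ N * 3 ^ d"
    by (simp only: d power_add power_Suc mult.assoc)
  moreover have "(2::real) ^ (k\<^sup>2) = 2 ^ N\<^sup>2 * 2 ^ e"
    by (simp only: e power_add)
  moreover have "k - Suc N = d" "k\<^sup>2 - N\<^sup>2 = e"
    using d e by simp_all
  ultimately show ?thesis
    by (simp add: mesh_def)
qed

lemma zigzag_scaled_lipschitz: "\<bar>zigzag_scaled k x - zigzag_scaled k y\<bar> \<le> 3 * \<bar>x - y\<bar>"
proof -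
  have "\<bar>zigzag_scaled k x - zigzag_scaled k y\<bar> = mesh k * \<bar>zigzag (x / mesh k) - zigzag (y / mesh k)\<bar>"
    using mesh_pos[of k] by (simp add: zigzag_scaled_def abs_mult flip: right_diff_distrib)
  also have "\<dots> \<le> mesh k * (3 * \<bar>x / mesh k - y / mesh k\<bar>)"
    using mesh_pos[of k] zigzag_lipschitz by (simp add: mult_left_mono)
  also have "\<dots> = 3 * \<bar>x - y\<bar>"
    using mesh_pos[of k] by (simp flip: diff_divide_distrib)
  finally show ?thesis .
qed

lemma zigzag_scaled_dist: "\<bar>zigzag_scaled k x - x\<bar> \<le> mesh k"
proof -
  have "zigzag_scaled k x - x = mesh k * (zigzag (x / mesh k) - x / mesh k)"
    using mesh_pos[of k] by (simp add: zigzag_scaled_def right_diff_distrib)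
  then have "\<bar>zigzag_scaled k x - x\<bar> = mesh k * \<bar>zigzag (x / mesh k) - x / mesh k\<bar>"
    using mesh_pos[of k] by (simp add: abs_mult)
  also have "\<dots> \<le> mesh k"
    using mesh_pos[of k] zigzag_dist_le_1 by (simp add: mult_left_le)
  finally show ?thesis .
qed

lemma zigzag_scaled_grid: "zigzag_scaled k (of_int n * mesh k) = of_int n * mesh k"
  using mesh_pos[of k] by (simp add: zigzag_scaled_def)

lemma zigzag_on_cells_zigzag_scaled: "zigzag_on_cells (mesh k) (zigzag_scaled k)"
  unfolding zigzag_scaled_def by (rule zigzag_on_cells_scaled[OF zigzag_on_cells_zigzag mesh_pos])

lemma zigzag_comp_lipschitz: "\<bar>zigzag_comp n x - zigzag_comp n y\<bar> \<le> 3 ^ n * \<bar>x - y\<bar>"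
proof (induction n arbitrary: x y)
  case 0
  then show ?case by simp
next
  case (Suc n)
  have "\<bar>zigzag_comp (Suc n) x - zigzag_comp (Suc n) y\<bar>
      \<le> 3 ^ n * \<bar>zigzag_scaled n x - zigzag_scaled n y\<bar>"
    using Suc.IH by simp
  also have "\<dots> \<le> 3 ^ n * (3 * \<bar>x - y\<bar>)"
    by (simp add: zigzag_scaled_lipschitz)
  finally show ?case
    by simp
qed

lemma zigzag_comp_Suc_dist: "\<bar>zigzag_comp (Suc k) x - zigzag_comp k x\<bar> \<le> (1 / 2) ^ (k\<^sup>2)"
proof -
  have "\<bar>zigzag_comp (Suc k) x - zigzag_comp k x\<bar> \<le> 3 ^ k * \<bar>zigzag_scaled k x - x\<bar>"
    using zigzag_comp_lipschitz by simp
  also have "\<dots> \<le> 3 ^ k * mesh k"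
    by (simp add: zigzag_scaled_dist)
  also have "\<dots> = (1 / 2) ^ (k\<^sup>2)"
    by (simp add: mesh_def power_one_over)
  finally show ?thesis .
qed

lemma zigzag_comp_Suc_eq_comp: "zigzag_comp (Suc k) = zigzag_comp k \<circ> zigzag_scaled k"
  by auto

lemma zigzag_comp_cellwise_affine: "cellwise_affine (mesh N) (3 ^ N) (zigzag_comp N)"
proof (induction N)
  case 0
  show ?case
    unfolding cellwise_affine_def by (intro allI exI[of _ 0] exI[of _ 1]) simp
next
  case (Suc N)
  have "cellwise_affine (mesh N / 3) (3 ^ Suc N) (zigzag_comp (Suc N))"
    unfolding zigzag_comp_Suc_eq_comp
    using cellwise_affine_comp[OF Suc.IH zigzag_on_cells_zigzag_scaled] by simp
  moreover have "0 < mesh N / 3"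
    using mesh_pos[of N] by simp
  ultimately show ?case
    using cellwise_affine_refine[of "mesh N / 3" _ _ "2 ^ (2 * N + 1)"]
    by (simp add: mesh_Suc del: zigzag_comp.simps)
qed

lemma zigzag_comp_Suc_cellwise_affine:
  "cellwise_affine (mesh N / 3) (3 ^ Suc N) (zigzag_comp (Suc N))"
  unfolding zigzag_comp_Suc_eq_comp
  using cellwise_affine_comp[OF zigzag_comp_cellwise_affine zigzag_on_cells_zigzag_scaled] by simp

lemma zigzag_comp_grid:
  assumes "Suc N \<le> k"
  shows "zigzag_comp k (of_int j * (mesh N / 3)) = zigzag_comp (Suc N) (of_int j * (mesh N / 3))"
  using assms
proof (induction k rule: dec_induct)
  case (step n)
  have "N < n"
    using step.hyps by simp
  then obtain r :: nat where r: "mesh N / 3 = of_nat r * mesh n"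
    using mesh_div_3_eq_multiple by blast
  have "zigzag_comp (Suc n) (of_int j * (mesh N / 3)) = zigzag_comp n (of_int j * (mesh N / 3))"
    using zigzag_scaled_grid[of n "j * int r"] unfolding r by (simp add: mult.assoc)
  also have "\<dots> = zigzag_comp (Suc N) (of_int j * (mesh N / 3))"
    by (rule step.IH)
  finally show ?case .
qed simp

section \<open>The limit function\<close>

definition zigzag_limit :: "real \<Rightarrow> real" where
  "zigzag_limit x = lim (\<lambda>n. zigzag_comp n x)"

lemma zigzag_comp_tendsto: "(\<lambda>n. zigzag_comp n x) \<longlonglongrightarrow> zigzag_limit x"
  unfolding zigzag_limit_def
  by (rule limit_of_summable_steps(1)[where F = "\<lambda>n. zigzag_comp n x", OF zigzag_comp_Suc_dist summable_half_power_sq])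

lemma zigzag_limit_approx: "\<bar>zigzag_limit x - zigzag_comp n x\<bar> \<le> 2 * (1 / 2) ^ (n\<^sup>2)"
  using limit_of_summable_steps(2)[where F = "\<lambda>n. zigzag_comp n x", OF zigzag_comp_Suc_dist summable_half_power_sq, of n]
    suminf_half_power_sq_shift_le[of n]
  unfolding zigzag_limit_def by linarith

lemma zigzag_limit_two_scale_bound:
  "\<bar>zigzag_limit x - zigzag_limit y\<bar> \<le> 4 ^ n * \<bar>x - y\<bar> + 4 * (1 / 2) ^ (n\<^sup>2)"
proof -
  have "(3 :: real) ^ n * \<bar>x - y\<bar> \<le> 4 ^ n * \<bar>x - y\<bar>"
    by (intro mult_right_mono power_mono) auto
  then show ?thesis
    using zigzag_limit_approx[of x n] zigzag_limit_approx[of y n] zigzag_comp_lipschitz[of n x y]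
    by linarith
qed

lemma zigzag_limit_holder:
  assumes "0 < \<alpha>" "\<alpha> < 1" "\<bar>x - y\<bar> \<le> 1"
  shows "\<bar>zigzag_limit x - zigzag_limit y\<bar> \<le> 9 * 2 powr (1 / (1 - \<alpha>)) * \<bar>x - y\<bar> powr \<alpha>"
  using holder_of_two_scale_bound[OF zigzag_limit_two_scale_bound _ assms] by simp

lemma continuous_on_zigzag_limit: "continuous_on UNIV zigzag_limit"
  by (rule continuous_on_of_holder[OF zigzag_limit_holder[of "1 / 2"]]) auto

lemma zigzag_comp_borel_measurable [measurable]: "zigzag_comp n \<in> borel_measurable borel"
proof -
  have "(3 ^ n)-lipschitz_on UNIV (zigzag_comp n)"
    by (rule lipschitz_onI) (simp_all add: dist_real_def zigzag_comp_lipschitz)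
  then show ?thesis
    by (intro borel_measurable_continuous_onI lipschitz_on_continuous_on)
qed

lemma zigzag_limit_grid:
  "zigzag_limit (of_int j * (mesh N / 3)) = zigzag_comp (Suc N) (of_int j * (mesh N / 3))"
proof (rule LIMSEQ_unique[OF zigzag_comp_tendsto tendsto_eventually])
  show "eventually (\<lambda>k. zigzag_comp k (of_int j * (mesh N / 3)) = zigzag_comp (Suc N) (of_int j * (mesh N / 3))) sequentially"
    using zigzag_comp_grid unfolding eventually_sequentially by blast
qed

lemma zigzag_limit_grid_increment:
  "\<bar>zigzag_limit ((of_int j + 1) * (mesh N / 3)) - zigzag_limit (of_int j * (mesh N / 3))\<bar>
     = 3 ^ Suc N * (mesh N / 3)"
proof -
  obtain c s where s: "\<bar>s\<bar> = 3 ^ Suc N"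
    and cs: "\<And>y. y \<in> cell (mesh N / 3) j \<Longrightarrow> zigzag_comp (Suc N) y = c + s * y"
    using zigzag_comp_Suc_cellwise_affine[of N] unfolding cellwise_affine_def by blast
  have "of_int j * (mesh N / 3) \<in> cell (mesh N / 3) j" "(of_int j + 1) * (mesh N / 3) \<in> cell (mesh N / 3) j"
    using mesh_pos[of N] by (auto simp: cell_def)
  then have "zigzag_limit ((of_int j + 1) * (mesh N / 3)) - zigzag_limit (of_int j * (mesh N / 3))
      = s * (mesh N / 3)"
    using zigzag_limit_grid[of j N] zigzag_limit_grid[of "j + 1" N] cs by (simp add: algebra_simps)
  then have "\<bar>zigzag_limit ((of_int j + 1) * (mesh N / 3)) - zigzag_limit (of_int j * (mesh N / 3))\<bar>
      = \<bar>s\<bar> * \<bar>mesh N / 3\<bar>"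
    by (simp only: abs_mult)
  then show ?thesis
    using s mesh_pos[of N] by simp
qed

lemma zigzag_limit_not_differentiable:
  assumes "x \<in> {0..1}"
  shows "\<not> zigzag_limit differentiable (at x within {0..1})"
proof (rule not_differentiable_of_steep_secants)
  fix d K :: real
  assume "0 < d"
  obtain N where N: "max K (1 / d) < 3 ^ N"
    using real_arch_pow[of 3 "max K (1 / d)"] by auto
  define \<delta> where "\<delta> = mesh N / 3"
  define M :: nat where "M = 3 * 3 ^ N * 2 ^ N\<^sup>2"
  have M: "\<delta> = 1 / real M" "0 < M"
    by (simp_all add: \<delta>_def M_def mesh_def)
  have \<delta>: "0 < \<delta>"
    using mesh_pos[of N] by (simp add: \<delta>_def)
  obtain j where j: "0 \<le> j" "j < int M" "x \<in> cell \<delta> j"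
    using unit_interval_cell_cover[OF M(2) assms] M(1) by metis
  have "cell \<delta> j \<subseteq> {0..1}"
    unfolding M(1) using j(1,2) by (rule cell_subset_unit_interval)
  moreover have "\<delta> < d"
  proof -
    have "\<delta> \<le> 1 / 3 ^ N"
      using mesh_le_inverse_power_3[of N] mesh_pos[of N] by (simp add: \<delta>_def)
    also have "1 / 3 ^ N < d"
      using N \<open>0 < d\<close> by (simp add: divide_less_eq mult.commute)
    finally show ?thesis .
  qed
  moreover have "K * \<delta> \<le> \<bar>zigzag_limit ((of_int j + 1) * \<delta>) - zigzag_limit (of_int j * \<delta>)\<bar>"
  proof -
    have "K \<le> 3 ^ Suc N"
      using N by simp (use zero_le_power[of "3 :: real" N] in linarith)
    then show ?thesis
      using zigzag_limit_grid_increment[of j N, folded \<delta>_def] \<delta> by (simp add: mult_right_mono)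
  qed
  ultimately show "\<exists>a b. a \<in> {0..1} \<and> b \<in> {0..1} \<and> a \<le> x \<and> x \<le> b \<and> a < b \<and> b - a < d \<and>
      K * (b - a) \<le> \<bar>zigzag_limit b - zigzag_limit a\<bar>"
    using j(3) \<delta> by (intro exI[of _ "of_int j * \<delta>"] exI[of _ "(of_int j + 1) * \<delta>"])
      (auto simp: cell_def algebra_simps)
qed

lemma critical_set_zigzag_limit: "critical_set zigzag_limit = {0..1}"
  using zigzag_limit_not_differentiable by (auto simp: critical_set_def)

lemma emeasure_zigzag_comp_vimage_le:
  "B \<in> sets borel \<Longrightarrow> emeasure lborel {x\<in>{0..1}. zigzag_comp n x \<in> B} \<le> emeasure lborel B"
proof (induction n arbitrary: B)
  case 0
  then show ?case
    by (intro emeasure_mono) auto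
next
  case (Suc n)
  define B' where "B' = {y\<in>{0..1}. zigzag_comp n y \<in> B}"
  have B': "B' \<in> sets borel"
    unfolding B'_def using Suc.prems by measurable
  have M: "mesh n = 1 / real (3 ^ n * 2 ^ n\<^sup>2)" "0 < (3 ^ n * 2 ^ n\<^sup>2 :: nat)"
    by (simp_all add: mesh_def)
  note zigzag = zigzag_on_cells_zigzag_scaled[of n, unfolded M(1)]
  have "{x\<in>{0..1}. zigzag_comp (Suc n) x \<in> B} = {x\<in>{0..1}. zigzag_scaled n x \<in> B'}"
    using zigzag_on_cells_maps_unit_interval[OF zigzag M(2)] by (auto simp: B'_def)
  also have "emeasure lborel \<dots> \<le> emeasure lborel B'"
    by (rule emeasure_vimage_le_of_zigzag_on_cells[OF zigzag M(2) B'])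
  also have "\<dots> \<le> emeasure lborel B"
    unfolding B'_def by (rule Suc.IH[OF Suc.prems])
  finally show ?case .
qed

lemma zigzag_limit_borel_measurable: "zigzag_limit \<in> borel_measurable borel"
  by (rule borel_measurable_continuous_onI[OF continuous_on_zigzag_limit])

lemma emeasure_zigzag_limit_vimage_null:
  assumes "B \<in> sets borel" "emeasure lborel B = 0"
  shows "emeasure lborel {x\<in>{0..1}. zigzag_limit x \<in> B} = 0"
  by (rule emeasure_vimage_null_of_open_le[OF emeasure_vimage_open_le_of_tendsto[OF zigzag_comp_tendsto
        zigzag_comp_borel_measurable _ emeasure_zigzag_comp_vimage_le] zigzag_limit_borel_measurable _ assms])
    simp_all

theorem theorem3:
  shows "\<exists>f :: real \<Rightarrow> real.
    continuous_on {0..1} f \<and>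
    (\<forall>\<alpha>::real. 0 < \<alpha> \<and> \<alpha> < 1 \<longrightarrow> holder_on01 \<alpha> f) \<and>
    \<not> mutually_singular
        (distr (density lebesgue (indicator (critical_set f))) lborel f) lborel"
proof (intro exI[of _ zigzag_limit] conjI allI impI)
  show "continuous_on {0..1} zigzag_limit"
    using continuous_on_zigzag_limit by (rule continuous_on_subset) simp
  show "holder_on01 \<alpha> zigzag_limit" if "0 < \<alpha> \<and> \<alpha> < 1" for \<alpha>
    unfolding holder_on01_def using that
    by (intro exI[of _ "9 * 2 powr (1 / (1 - \<alpha>))"] ballI zigzag_limit_holder) auto
  show "\<not> mutually_singular (distr (density lebesgue (indicator (critical_set zigzag_limit))) lborel zigzag_limit) lborel"
    unfolding critical_set_zigzag_limit
    by (rule not_mutually_singular_distr_density[OF _ _ zigzag_limit_borel_measurable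
          emeasure_zigzag_limit_vimage_null]) simp_all
qed

end
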